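(* Let $\sigma\in\Sigma^0_{E_N}$ be non-trivial, and assume there is an edge $e\in\mathrm{supp}\,\sigma$ with $\partial\hat\partial\partial\hat\partial e\subseteq E_N$. Then $|(\mathrm{supp}\,\sigma)^+|\ge 8$.
   Context: Work on $\mathbb Z^4$; oriented edges come in pairs $e,-e$; $dx_j=(x,x+\mathbf e_j)$ positively oriented. For a plaquette $p=dx_{j_1}\wedge dx_{j_2}$ ($j_1<j_2$), $\partial p=\{dx_{j_1},d(x+\mathbf e_{j_1})_{j_2},-d(x+\mathbf e_{j_2})_{j_1},-dx_{j_2}\}$, $\partial(-p)=-\partial p$. $\hat\partial e=\{p:e\in\partial p\}$; for sets $\partial A=\bigcup_{p\in A}\partial p$, $\hat\partial B=\bigcup_{e\in B}\hat\partial e$, so $\partial\hat\partial\partial\hat\partial e$ is obtained by applying these operations successively to $\{e\}$. $B_N=[-N,N]^4\cap\mathbb Z^4$; $E_N$, $P_N$ are the oriented edges/plaquettes with all vertices in $B_N$. $G=\mathbb Z_n$. $\Sigma_{E_N}$: maps $\sigma:E_N\to G$ with $\sigma_{-e}=-\sigma_e$; $(d\sigma)_p=\sum_{e\in\partial p}\sigma_e$; $\Sigma^0_{E_N}=\{d\sigma=0\}$. $\mathrm{supp}\,\sigma=\{e:\sigma_e\ne0\}$ and $(\cdot)^+$ denotes the positively oriented elements of a set. *)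

theory Defs
  imports "HOL-Analysis.Finite_Cartesian_Product"
begin

text \<open>An oriented edge (x, j, s): if s = True it is dx_j = (x, x + e_j),
 if s = False it is -dx_j. An oriented plaquette (x, j1, j2, s) with j1 < j2:
 s = True is dx_j1 wedge dx_j2, s = False is its negative.\<close>

type_synonym vertex = "int ^ 4"
type_synonym edge = "vertex \<times> 4 \<times> bool"
type_synonym plaq = "vertex \<times> 4 \<times> 4 \<times> bool"

definition unitv :: "4 \<Rightarrow> vertex" where
  "unitv j = (\<chi> i. if i = j then 1 else 0)"

fun edge_neg :: "edge \<Rightarrow> edge" where
  "edge_neg (x, j, s) = (x, j, \<not> s)"

fun edge_pos :: "edge \<Rightarrow> bool" where
  "edge_pos (x, j, s) = s"

fun edge_verts :: "edge \<Rightarrow> vertex set" where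
  "edge_verts (x, j, s) = {x, x + unitv j}"

fun is_plaq :: "plaq \<Rightarrow> bool" where
  "is_plaq (x, j1, j2, s) = (j1 < j2)"

fun plaq_verts :: "plaq \<Rightarrow> vertex set" where
  "plaq_verts (x, j1, j2, s) = {x, x + unitv j1, x + unitv j2, x + unitv j1 + unitv j2}"

fun plaq_bd :: "plaq \<Rightarrow> edge set" where
  "plaq_bd (x, j1, j2, s) =
     (let B = {(x, j1, True), (x + unitv j1, j2, True), (x + unitv j2, j1, False), (x, j2, False)}
      in if s then B else edge_neg ` B)"

definition edge_cobd :: "edge \<Rightarrow> plaq set" where
  "edge_cobd e = {p. is_plaq p \<and> e \<in> plaq_bd p}"

definition bdS :: "plaq set \<Rightarrow> edge set" where
  "bdS A = \<Union> (plaq_bd ` A)"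

definition cobdS :: "edge set \<Rightarrow> plaq set" where
  "cobdS B = \<Union> (edge_cobd ` B)"

definition box :: "nat \<Rightarrow> vertex set" where
  "box N = {x. \<forall>i. \<bar>x $ i\<bar> \<le> int N}"

definition EN :: "nat \<Rightarrow> edge set" where
  "EN N = {e. edge_verts e \<subseteq> box N}"

definition PN :: "nat \<Rightarrow> plaq set" where
  "PN N = {p. is_plaq p \<and> plaq_verts p \<subseteq> box N}"

text \<open>G = Z_n, elements represented by the integers 0..n-1. sigma is only relevant on E_N.
 closed_config n N sigma: sigma is in Sigma^0_{E_N}.\<close>
definition closed_config :: "nat \<Rightarrow> nat \<Rightarrow> (edge \<Rightarrow> int) \<Rightarrow> bool" where
  "closed_config n N \<sigma> \<longleftrightarrow>
     (\<forall>e\<in>EN N. \<sigma> e \<in> {0..<int n} \<and> \<sigma> (edge_neg e) = (- \<sigma> e) mod int n) \<and>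
     (\<forall>p\<in>PN N. (\<Sum>e\<in>plaq_bd p. \<sigma> e) mod int n = 0)"

definition supp :: "nat \<Rightarrow> (edge \<Rightarrow> int) \<Rightarrow> edge set" where
  "supp N \<sigma> = {e \<in> EN N. \<sigma> e \<noteq> 0}"

end

theory Submission
  imports Defs
begin

text \<open>No plaquette inside the box can carry exactly one edge of the support of a closed
  configuration: its boundary sum would then be a single nonzero residue mod n.
  Let (x, j) be the positive version of e and k \<noteq> j. The two plaquettes of the (j, k)-plane
  on either side of (x, j) therefore carry further support edges f and h. The six plaquettes
  through f meet pairwise only in f, and each carries one more support edge, so together with
  f this gives seven edges. The edge h lies on none of these six plaquettes: some vertex of f
  and some vertex of h differ by 2 in the k-coordinate, whereas all vertices of a plaquette lie
  in a unit cube. The hypothesis on the neighbourhood of e keeps all plaquettes used here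
  inside the box.\<close>

lemma unitv_nth: "unitv a $ i = (if i = a then 1 else 0)"
  by (simp add: unitv_def)

lemma unitv_eq_iff [simp]: "unitv a = unitv b \<longleftrightarrow> a = b"
  by (metis unitv_nth vec_eq_iff zero_neq_one)

lemma unitv_neq_zero [simp]: "unitv a \<noteq> 0" "0 \<noteq> unitv a"
  by (metis unitv_nth zero_index zero_neq_one)+

lemma unitv_neq_uminus [simp]: "unitv a \<noteq> - unitv b" "- unitv b \<noteq> unitv a"
proof -
  show "unitv a \<noteq> - unitv b"
  proof
    assume "unitv a = - unitv b"
    then have "unitv a $ a = - (unitv b $ a)" by simp
    then show False by (simp add: unitv_nth split: if_splits)
  qed
  then show "- unitv b \<noteq> unitv a" by metis
qed

fun pos_edge :: "edge \<Rightarrow> edge" where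
  "pos_edge (x, j, s) = (x, j, True)"

lemma pos_edge_in_EN_iff [simp]: "pos_edge e \<in> EN N \<longleftrightarrow> e \<in> EN N"
  by (cases e) (simp add: EN_def)

lemma closed_config_range:
  assumes "closed_config n N \<sigma>" "e \<in> EN N"
  shows "0 \<le> \<sigma> e \<and> \<sigma> e < int n"
  using assms by (auto simp: closed_config_def)

lemma closed_config_pos_edge_eq_0_iff:
  assumes cc: "closed_config n N \<sigma>" and e: "e \<in> EN N"
  shows "\<sigma> (pos_edge e) = 0 \<longleftrightarrow> \<sigma> e = 0"
proof (cases e)
  case (fields x j s)
  let ?v = "\<sigma> (x, j, True)"
  have "(x, j, True) \<in> EN N"
    using e fields by (metis pos_edge.simps pos_edge_in_EN_iff)
  then have range: "0 \<le> ?v" "?v < int n" and neg: "\<sigma> (x, j, False) = (- ?v) mod int n"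
    using cc closed_config_range[OF cc] by (auto simp: closed_config_def)
  have "(- ?v) mod int n = 0 \<longleftrightarrow> ?v = 0"
  proof
    assume "(- ?v) mod int n = 0"
    then have "int n dvd ?v"
      by (simp add: mod_eq_0_iff_dvd)
    with range show "?v = 0"
      using zdvd_imp_le by fastforce
  qed simp
  then show ?thesis
    using fields neg by (cases s) auto
qed

lemma pos_edge_in_supp:
  assumes "closed_config n N \<sigma>" "e \<in> supp N \<sigma>"
  shows "pos_edge e \<in> supp N \<sigma>"
  using assms closed_config_pos_edge_eq_0_iff[OF assms(1)] by (simp add: supp_def)

definition plaq_edges :: "vertex \<Rightarrow> 4 \<Rightarrow> 4 \<Rightarrow> edge set" where
  "plaq_edges y a b = {(y, a, True), (y + unitv a, b, True), (y + unitv b, a, True), (y, b, True)}"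

lemma plaq_edges_commute: "plaq_edges y a b = plaq_edges y b a"
  by (auto simp: plaq_edges_def)

lemma plaq_edges_ordered:
  assumes "a \<noteq> b"
  obtains a' b' where "a' < b'" "plaq_edges y a b = plaq_edges y a' b'"
  using assms plaq_edges_commute by (metis neqE)

lemma pos_edge_plaq_bd: "pos_edge ` plaq_bd (y, a, b, s) = plaq_edges y a b"
  by (cases s) (auto simp: plaq_edges_def)

lemma inj_on_pos_edge_plaq_bd:
  assumes "a \<noteq> b"
  shows "inj_on pos_edge (plaq_bd (y, a, b, s))"
  using assms by (cases s) (auto simp: inj_on_def)

lemma pos_edge_in_plaq_edges_iff:
  "pos_edge e \<in> plaq_edges y a b \<longleftrightarrow> e \<in> plaq_bd (y, a, b, True) \<union> plaq_bd (y, a, b, False)"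
  by (cases e) (auto simp: plaq_edges_def)

lemma plaq_in_PN:
  assumes "a < b" "plaq_edges y a b \<subseteq> EN N"
  shows "(y, a, b, s) \<in> PN N"
  using assms by (auto simp: PN_def EN_def plaq_edges_def add_ac)

lemma edge_pos_if_in_plaq_edges: "f \<in> plaq_edges y a b \<Longrightarrow> edge_pos f"
  by (auto simp: plaq_edges_def)

lemma closed_config_no_lonely_edge:
  assumes cc: "closed_config n N \<sigma>" and "a \<noteq> b"
    and box: "plaq_edges y a b \<subseteq> EN N"
    and f: "f \<in> plaq_edges y a b" "f \<in> supp N \<sigma>"
  shows "\<exists>g \<in> plaq_edges y a b - {f}. g \<in> supp N \<sigma>"
proof (rule ccontr)
  assume lonely: "\<not> ?thesis"
  obtain a' b' where "a' < b'" and P: "plaq_edges y a b = plaq_edges y a' b'"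
    using \<open>a \<noteq> b\<close> by (rule plaq_edges_ordered)
  define B where "B = plaq_bd (y, a', b', True)"
  have image: "pos_edge ` B = plaq_edges y a b"
    unfolding B_def P by (rule pos_edge_plaq_bd)
  have inj: "inj_on pos_edge B"
    unfolding B_def using \<open>a' < b'\<close> by (intro inj_on_pos_edge_plaq_bd) simp
  have B_EN: "g \<in> EN N" if "g \<in> B" for g
    using box image that pos_edge_in_EN_iff by blast
  obtain f' where f': "f' \<in> B" "pos_edge f' = f"
    using f(1) unfolding image[symmetric] by blast
  have "\<sigma> g = 0" if "g \<in> B - {f'}" for g
  proof -
    have "pos_edge g \<in> plaq_edges y a b - {f}"
      using that f' inj image by (auto dest: inj_onD)
    then have "\<sigma> (pos_edge g) = 0"
      using lonely that B_EN by (auto simp: supp_def)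
    then show ?thesis
      using closed_config_pos_edge_eq_0_iff[OF cc B_EN] that by blast
  qed
  then have "(\<Sum>g\<in>B. \<sigma> g) = \<sigma> f'"
    using sum.remove[OF _ f'(1), of \<sigma>] by (simp add: B_def)
  moreover have "(\<Sum>g\<in>B. \<sigma> g) mod int n = 0"
  proof -
    have "(y, a', b', True) \<in> PN N"
      using plaq_in_PN[OF \<open>a' < b'\<close>] box P by simp
    then show ?thesis
      using cc unfolding closed_config_def B_def by blast
  qed
  moreover have "\<sigma> f' \<noteq> 0"
    using f f' closed_config_pos_edge_eq_0_iff[OF cc B_EN[OF f'(1)]] by (auto simp: supp_def)
  ultimately show False
    using closed_config_range[OF cc B_EN[OF f'(1)]] by simp
qed

lemma plaq_edges_subset_bd_cobd:
  assumes "a \<noteq> b" "f \<in> plaq_edges y a b" "f \<in> pos_edge ` B"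
  shows "plaq_edges y a b \<subseteq> pos_edge ` bdS (cobdS B)"
proof -
  obtain a' b' where "a' < b'" and P: "plaq_edges y a b = plaq_edges y a' b'"
    using \<open>a \<noteq> b\<close> by (rule plaq_edges_ordered)
  obtain f0 where "f0 \<in> B" "pos_edge f0 = f"
    using assms(3) by auto
  then obtain s where "f0 \<in> plaq_bd (y, a', b', s)"
    using assms(2) P pos_edge_in_plaq_edges_iff by blast
  then have "(y, a', b', s) \<in> cobdS B"
    using \<open>f0 \<in> B\<close> \<open>a' < b'\<close> by (auto simp: cobdS_def edge_cobd_def)
  then have "plaq_bd (y, a', b', s) \<subseteq> bdS (cobdS B)"
    by (auto simp: bdS_def)
  then show ?thesis
    using P pos_edge_plaq_bd by (metis image_mono)
qed

lemma closed_config_no_lonely_edge_near: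
  assumes cc: "closed_config n N \<sigma>" and near: "bdS (cobdS B) \<subseteq> EN N"
    and "a \<noteq> b" "f \<in> plaq_edges y a b" "f \<in> pos_edge ` B" "f \<in> supp N \<sigma>"
  shows "\<exists>g \<in> plaq_edges y a b - {f}. g \<in> {g \<in> supp N \<sigma>. edge_pos g}"
proof -
  have "plaq_edges y a b \<subseteq> pos_edge ` EN N"
    using plaq_edges_subset_bd_cobd[OF assms(3-5)] near by (meson image_mono order_trans)
  then have "plaq_edges y a b \<subseteq> EN N"
    using pos_edge_in_EN_iff by blast
  then show ?thesis
    using closed_config_no_lonely_edge[OF cc \<open>a \<noteq> b\<close> _ assms(4,6)] edge_pos_if_in_plaq_edges
    by blast
qed

lemma plaq_edges_vertex_bounds:
  assumes "a \<noteq> b" "f \<in> plaq_edges y a b" "u \<in> edge_verts f"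
  shows "y $ i \<le> u $ i \<and> u $ i \<le> y $ i + 1"
  using assms by (auto simp: plaq_edges_def unitv_nth)

lemma plaq_edges_vertices_close:
  assumes "a \<noteq> b" "f \<in> plaq_edges y a b" "g \<in> plaq_edges y a b"
    and "u \<in> edge_verts f" "v \<in> edge_verts g"
  shows "\<bar>u $ i - v $ i\<bar> \<le> 1"
  using plaq_edges_vertex_bounds[OF assms(1,2,4), where i=i]
    plaq_edges_vertex_bounds[OF assms(1,3,5), where i=i]
  by linarith

lemma no_plaquette_across_edge:
  assumes "j \<noteq> k" "a \<noteq> b"
    and f: "f \<in> plaq_edges x j k - {(x, j, True)}"
    and g: "g \<in> plaq_edges (x - unitv k) j k - {(x, j, True)}"
    and "f \<in> plaq_edges y a b"
  shows "g \<notin> plaq_edges y a b"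
proof
  assume "g \<in> plaq_edges y a b"
  have "x + unitv k \<in> edge_verts f \<or> x + unitv j + unitv k \<in> edge_verts f"
    using f by (auto simp: plaq_edges_def add_ac)
  then obtain u where u: "u \<in> edge_verts f" "u $ k = x $ k + 1"
    using \<open>j \<noteq> k\<close> by (auto simp: unitv_nth)
  have "x - unitv k \<in> edge_verts g \<or> x - unitv k + unitv j \<in> edge_verts g"
    using g by (auto simp: plaq_edges_def)
  then obtain v where v: "v \<in> edge_verts g" "v $ k = x $ k - 1"
    using \<open>j \<noteq> k\<close> by (auto simp: unitv_nth)
  show False
    using plaq_edges_vertices_close[OF \<open>a \<noteq> b\<close> \<open>f \<in> plaq_edges y a b\<close>
        \<open>g \<in> plaq_edges y a b\<close> u(1) v(1), where i=k] u(2) v(2)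
    by simp
qed

text \<open>For d \<noteq> c these are the six plaquettes through the edge (z, c); s selects on which
  side of the edge, in direction d, the plaquette lies.\<close>

definition star_plaq :: "vertex \<Rightarrow> 4 \<Rightarrow> 4 \<Rightarrow> bool \<Rightarrow> edge set" where
  "star_plaq z c d s = plaq_edges (if s then z else z - unitv d) c d"

lemma in_star_plaq: "(z, c, True) \<in> star_plaq z c d s"
  by (auto simp: star_plaq_def plaq_edges_def)

lemma star_plaq_inter:
  assumes "c \<noteq> d" "c \<noteq> d'" "(d, s) \<noteq> (d', s')"
  shows "star_plaq z c d s \<inter> star_plaq z c d' s' = {(z, c, True)}"
  using assms by (cases s; cases s'; auto simp: star_plaq_def plaq_edges_def)

lemma card_ge_8_if_no_lonely_edge:
  fixes S :: "edge set"
  assumes "finite S" and f: "(z, c, True) \<in> S" and h: "h \<in> S"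
    and separated: "\<And>y a b. a \<noteq> b \<Longrightarrow> (z, c, True) \<in> plaq_edges y a b \<Longrightarrow> h \<notin> plaq_edges y a b"
    and no_lonely: "\<And>y a b. a \<noteq> b \<Longrightarrow> (z, c, True) \<in> plaq_edges y a b \<Longrightarrow>
      \<exists>g \<in> plaq_edges y a b - {(z, c, True)}. g \<in> S"
  shows "8 \<le> card S"
proof -
  define I where "I = (UNIV - {c}) \<times> (UNIV :: bool set)"
  have lonely_star: "\<exists>g \<in> star_plaq z c d s - {(z, c, True)}. g \<in> S" if "d \<noteq> c" for d s
    using no_lonely[of c d] in_star_plaq[of z c d s] that by (simp add: star_plaq_def)
  have "\<forall>p \<in> I. \<exists>g. g \<in> star_plaq z c (fst p) (snd p) - {(z, c, True)} \<and> g \<in> S"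
  proof
    fix p assume "p \<in> I"
    then have "fst p \<noteq> c" by (auto simp: I_def)
    from lonely_star[OF this] show "\<exists>g. g \<in> star_plaq z c (fst p) (snd p) - {(z, c, True)} \<and> g \<in> S"
      by blast
  qed
  from bchoice[OF this] obtain g where
    g: "\<forall>p \<in> I. g p \<in> star_plaq z c (fst p) (snd p) - {(z, c, True)} \<and> g p \<in> S"
    by blast
  have "inj_on g I"
  proof (rule inj_onI)
    fix p q assume pq: "p \<in> I" "q \<in> I" "g p = g q"
    show "p = q"
    proof (rule ccontr)
      assume "p \<noteq> q"
      moreover have "fst p \<noteq> c" "fst q \<noteq> c"
        using pq by (auto simp: I_def)
      ultimately have "star_plaq z c (fst p) (snd p) \<inter> star_plaq z c (fst q) (snd q) = {(z, c, True)}"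
        by (intro star_plaq_inter) (auto simp: prod_eq_iff)
      then show False
        using g pq by auto
    qed
  qed
  moreover have "card I = 6"
    by (simp add: I_def card_cartesian_product)
  ultimately have "card (g ` I) = 6"
    by (simp add: card_image)
  obtain d :: 4 where "d \<noteq> c"
    by (metis zero_neq_one)
  then have "h \<noteq> (z, c, True)"
    using separated[of c d z] in_star_plaq[of z c d True] by (auto simp: star_plaq_def)
  moreover have "h \<notin> g ` I"
  proof
    assume "h \<in> g ` I"
    then obtain d s where "(d, s) \<in> I" "h \<in> star_plaq z c d s"
      using g by auto
    then show False
      using separated in_star_plaq by (auto simp: I_def star_plaq_def)
  qed
  moreover have "(z, c, True) \<notin> g ` I"
    using g by auto
  ultimately have "card (insert (z, c, True) (insert h (g ` I))) = 8"
    using \<open>card (g ` I) = 6\<close> by (simp add: card_insert_if finite_imageI I_def)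
  moreover have "insert (z, c, True) (insert h (g ` I)) \<subseteq> S"
    using f h g by auto
  ultimately show ?thesis
    using card_mono[OF \<open>finite S\<close>] by metis
qed

lemma finite_box: "finite (box N)"
proof (rule finite_subset)
  show "box N \<subseteq> vec_lambda ` (UNIV \<rightarrow>\<^sub>E {-int N..int N})"
  proof
    fix x assume "x \<in> box N"
    then have "vec_nth x \<in> UNIV \<rightarrow>\<^sub>E {-int N..int N}"
      by (auto simp: box_def abs_le_iff minus_le_iff)
    then show "x \<in> vec_lambda ` (UNIV \<rightarrow>\<^sub>E {-int N..int N})"
      by (metis image_eqI vec_nth_inverse)
  qed
qed (intro finite_imageI finite_PiE; simp)

lemma finite_EN: "finite (EN N)"
  by (rule finite_subset[of _ "box N \<times> UNIV"]) (auto simp: EN_def finite_box)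

lemma finite_supp: "finite (supp N \<sigma>)"
  by (rule finite_subset[OF _ finite_EN]) (auto simp: supp_def)

theorem mainTheorem5:
  fixes n N :: nat and \<sigma> :: "edge \<Rightarrow> int" and e :: edge
  assumes "closed_config n N \<sigma>"
    and "supp N \<sigma> \<noteq> {}"
    and "e \<in> supp N \<sigma>"
    and "bdS (cobdS (bdS (cobdS {e}))) \<subseteq> EN N"
  shows "card {f \<in> supp N \<sigma>. edge_pos f} \<ge> 8"
proof -
  define R where "R = bdS (cobdS {e})"
  note no_lonely = closed_config_no_lonely_edge_near[OF assms(1) assms(4)[folded R_def]]
  obtain x j where e0: "pos_edge e = (x, j, True)"
    by (cases e) auto
  obtain k :: 4 where "j \<noteq> k"
    by (metis zero_neq_one)
  have e0_in: "(x, j, True) \<in> plaq_edges x j k" "(x, j, True) \<in> plaq_edges (x - unitv k) j k"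
    by (auto simp: plaq_edges_def)
  then have P: "plaq_edges x j k \<subseteq> pos_edge ` R" "plaq_edges (x - unitv k) j k \<subseteq> pos_edge ` R"
    using plaq_edges_subset_bd_cobd[OF \<open>j \<noteq> k\<close>, of "(x, j, True)" _ "{e}"] e0 by (auto simp: R_def)
  have "(x, j, True) \<in> supp N \<sigma>"
    using pos_edge_in_supp[OF assms(1,3)] e0 by simp
  note no_lonely_e0 = no_lonely[OF \<open>j \<noteq> k\<close> _ _ this]
  obtain f where f: "f \<in> plaq_edges x j k - {(x, j, True)}" "f \<in> supp N \<sigma>" "edge_pos f"
    using no_lonely_e0[OF e0_in(1)] P(1) e0_in(1) by blast
  obtain h where h: "h \<in> plaq_edges (x - unitv k) j k - {(x, j, True)}" "h \<in> supp N \<sigma>" "edge_pos h"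
    using no_lonely_e0[OF e0_in(2)] P(2) e0_in(2) by blast
  obtain z c where fzc: "f = (z, c, True)"
    using f(1) by (auto simp: plaq_edges_def)
  show ?thesis
  proof (rule card_ge_8_if_no_lonely_edge)
    show "h \<notin> plaq_edges y a b" if "a \<noteq> b" "(z, c, True) \<in> plaq_edges y a b" for y a b
      using no_plaquette_across_edge[OF \<open>j \<noteq> k\<close> that(1) f(1) h(1)] that(2) fzc by simp
    show "\<exists>g \<in> plaq_edges y a b - {(z, c, True)}. g \<in> {f \<in> supp N \<sigma>. edge_pos f}"
      if "a \<noteq> b" "(z, c, True) \<in> plaq_edges y a b" for y a b
      using no_lonely[OF that] f P(1) fzc by auto
  qed (use f h fzc finite_supp in auto)
qed

end
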